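(* Let $\alpha\geq2$ be an ordinal. If $\mathfrak A\in TA_\alpha$ is atomic (its Boolean reduct is atomic), then $\mathfrak A$ is completely representable: there are a permutable set $V$ (for infinite $\alpha$, a permutable subset of a weak space) and an injective homomorphism $f:\mathfrak A\to\wp(V)$ such that $f(\prod Y)=\bigcap_{y\in Y}f(y)$ for every $Y\subseteq A$ for which $\prod Y$ exists; moreover $\bigcup_{x\in\mathrm{At}\mathfrak A}f(x)=V$.
   Context: $TA_\alpha=\mathbf{Mod}(\Sigma_\alpha)$, where $\Sigma_\alpha$ (signature $\wedge,-,s_{ij}$ for $i\neq j<\alpha$) consists of the Boolean algebra axioms, the equations saying each $s_{ij}$ is a Boolean endomorphism, and $t_1(x)=t_2(x)$ for all words $t_1,t_2$ in the $s_{ij}$ whose associated compositions of transpositions $[i,j]$ coincide. A weak space is ${}^\alpha U^{(p)}=\{s\in{}^\alpha U:|\{i:s_i\neq p_i\}|<\omega\}$ for a set $U$ and $p\in{}^\alpha U$. A set $V$ of sequences is permutable if $s\circ[i,j]\in V$ for all $s\in V$, $i\neq j<\alpha$. $\wp(V)=\langle\mathcal P(V);\cap,-,S_{ij}\rangle$ with complement relative to $V$ and $S_{ij}(Y)=\{q\in V:q\circ[i,j]\in Y\}$. $\mathrm{At}\mathfrak A$ is the set of atoms. *)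

theory Defs
  imports Main "HOL-Combinatorics.Transposition"
begin

text \<open>Words in the substitution operators s_ij, represented as lists of index pairs.\<close>

definition word_ok :: "('i \<times> 'i) list \<Rightarrow> bool" where
  "word_ok w \<longleftrightarrow> (\<forall>(i,j)\<in>set w. i \<noteq> j)"

definition word_term :: "('i \<Rightarrow> 'i \<Rightarrow> 'a \<Rightarrow> 'a) \<Rightarrow> ('i \<times> 'i) list \<Rightarrow> 'a \<Rightarrow> 'a" where
  "word_term s w = foldr (\<lambda>(i,j) g. s i j \<circ> g) w id"

definition word_perm :: "('i \<times> 'i) list \<Rightarrow> 'i \<Rightarrow> 'i" where
  "word_perm w = foldr (\<lambda>(i,j) g. transpose i j \<circ> g) w id"

text \<open>TA_alpha = Mod(Sigma_alpha). The Boolean reduct is the ambient type 'a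
  (class boolean_algebra, meet = inf, complement = uminus); s i j is the operation s_ij.\<close>

definition TA :: "('i \<Rightarrow> 'i \<Rightarrow> 'a::boolean_algebra \<Rightarrow> 'a) \<Rightarrow> bool" where
  "TA s \<longleftrightarrow>
     (\<forall>i j. i \<noteq> j \<longrightarrow> (\<forall>x y. s i j (inf x y) = inf (s i j x) (s i j y)) \<and> (\<forall>x. s i j (- x) = - s i j x))
   \<and> (\<forall>w1 w2. word_ok w1 \<and> word_ok w2 \<and> word_perm w1 = word_perm w2
        \<longrightarrow> (\<forall>x. word_term s w1 x = word_term s w2 x))"

definition is_atom :: "'a::boolean_algebra \<Rightarrow> bool" where
  "is_atom a \<longleftrightarrow> a \<noteq> bot \<and> (\<forall>y. y \<le> a \<longrightarrow> y = bot \<or> y = a)"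

definition atomic_ba :: "'a::boolean_algebra itself \<Rightarrow> bool" where
  "atomic_ba _ \<longleftrightarrow> (\<forall>x::'a. x \<noteq> bot \<longrightarrow> (\<exists>a. is_atom a \<and> a \<le> x))"

definition is_prod :: "'a::boolean_algebra set \<Rightarrow> 'a \<Rightarrow> bool" where
  "is_prod Y m \<longleftrightarrow> (\<forall>y\<in>Y. m \<le> y) \<and> (\<forall>z. (\<forall>y\<in>Y. z \<le> y) \<longrightarrow> z \<le> m)"

definition permutable :: "('i \<Rightarrow> 'u) set \<Rightarrow> bool" where
  "permutable V \<longleftrightarrow> (\<forall>q\<in>V. \<forall>i j. i \<noteq> j \<longrightarrow> q \<circ> transpose i j \<in> V)"

definition weak_space :: "'u set \<Rightarrow> ('i \<Rightarrow> 'u) \<Rightarrow> ('i \<Rightarrow> 'u) set" where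
  "weak_space U p = {q. (\<forall>i. q i \<in> U) \<and> finite {i. q i \<noteq> p i}}"

definition Subst :: "('i \<Rightarrow> 'u) set \<Rightarrow> 'i \<Rightarrow> 'i \<Rightarrow> ('i \<Rightarrow> 'u) set \<Rightarrow> ('i \<Rightarrow> 'u) set" where
  "Subst V i j Y = {q\<in>V. q \<circ> transpose i j \<in> Y}"

definition hom_wp :: "('i \<Rightarrow> 'i \<Rightarrow> 'a::boolean_algebra \<Rightarrow> 'a) \<Rightarrow> ('i \<Rightarrow> 'u) set \<Rightarrow> ('a \<Rightarrow> ('i \<Rightarrow> 'u) set) \<Rightarrow> bool" where
  "hom_wp s V f \<longleftrightarrow> (\<forall>x. f x \<subseteq> V)
     \<and> (\<forall>x y. f (inf x y) = f x \<inter> f y)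
     \<and> (\<forall>x. f (- x) = V - f x)
     \<and> (\<forall>i j x. i \<noteq> j \<longrightarrow> f (s i j x) = Subst V i j (f x))"

end

theory Submission
  imports Defs
begin

text \<open>Points are pairs \<open>(a, w)\<close> of an atom \<open>a\<close> and a word \<open>w\<close>, and \<open>x\<close> is represented by the
  points whose atom \<open>word_term s (rev w) a\<close> lies below \<open>x\<close>. This depends only on the permutation
  \<open>word_perm w\<close> by the defining equations of \<open>TA\<close>, and each \<open>s\<^sub>i\<^sub>j\<close> is an involutive Boolean
  automorphism, hence maps atoms to atoms and is its own residual. Composing with \<open>[i,j]\<close>
  appends \<open>(i,j)\<close> to \<open>w\<close>, which gives the homomorphism property for \<open>s\<^sub>i\<^sub>j\<close>; meets and
  complements are preserved because membership is tested on atoms, which also makes all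
  existing infima preserved, and atomicity gives injectivity. A point is encoded as a
  permuted sequence carrying \<open>a\<close> at one coordinate, so all points lie in one weak space.\<close>

lemma word_perm_Nil [simp]: "word_perm [] = id"
  by (simp add: word_perm_def)

lemma word_perm_Cons [simp]: "word_perm ((i, j) # w) = transpose i j \<circ> word_perm w"
  by (simp add: word_perm_def)

lemma word_term_Nil [simp]: "word_term s [] = id"
  by (simp add: word_term_def)

lemma word_term_Cons [simp]: "word_term s ((i, j) # w) = s i j \<circ> word_term s w"
  by (simp add: word_term_def)

lemma word_perm_append: "word_perm (w @ v) = word_perm w \<circ> word_perm v"
  by (induction w) (auto simp: comp_assoc)

lemma word_perm_rev_inverse: "word_perm w (word_perm (rev w) k) = k"
proof (induction w arbitrary: k)
  case (Cons x w)
  obtain i j where "x = (i, j)" by fastforce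
  with Cons.IH show ?case by (simp add: word_perm_append)
qed simp

lemma word_perm_rev_cong:
  assumes "word_perm w = word_perm w'"
  shows "word_perm (rev w) = word_perm (rev w')"
proof
  fix k
  have "word_perm (rev w) k = word_perm (rev w) (word_perm w' (word_perm (rev w') k))"
    by (simp add: word_perm_rev_inverse)
  also have "\<dots> = word_perm (rev w') k"
    using word_perm_rev_inverse[of "rev w"] by (simp add: assms)
  finally show "word_perm (rev w) k = word_perm (rev w') k" .
qed

lemma finite_word_perm_support: "finite {k. word_perm w k \<noteq> k}"
proof (induction w)
  case (Cons x w)
  obtain i j where x: "x = (i, j)" by fastforce
  have "{k. word_perm (x # w) k \<noteq> k} \<subseteq> {k. word_perm w k \<noteq> k} \<union> {i, j}"
    by (auto simp: x transpose_def)
  then show ?case using Cons.IH finite_subset by blast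
qed simp

lemma word_ok_rev [simp]: "word_ok (rev w) = word_ok w"
  by (simp add: word_ok_def)

lemma word_ok_snoc: "word_ok w \<Longrightarrow> i \<noteq> j \<Longrightarrow> word_ok (w @ [(i, j)])"
  by (auto simp: word_ok_def)

lemma word_term_rev_cong:
  assumes "TA s" "word_ok w" "word_ok w'" "word_perm w = word_perm w'"
  shows "word_term s (rev w) = word_term s (rev w')"
  using assms word_perm_rev_cong[OF assms(4)] unfolding TA_def by fastforce

lemma TA_involutive:
  assumes "TA s" "i \<noteq> j"
  shows "s i j (s i j x) = x"
proof -
  have "word_ok [(i, j), (i, j)]" "word_ok ([] :: ('i \<times> 'i) list)"
    using assms(2) by (auto simp: word_ok_def)
  moreover have "word_perm [(i, j), (i, j)] = word_perm []" by simp
  ultimately have "word_term s [(i, j), (i, j)] x = word_term s [] x"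
    using assms(1) unfolding TA_def by blast
  then show ?thesis by simp
qed

lemma TA_mono:
  assumes "TA s" "i \<noteq> j" "x \<le> y"
  shows "s i j x \<le> s i j y"
proof -
  have "s i j x = s i j (inf x y)" using assms(3) by (simp add: inf_absorb1)
  also have "\<dots> = inf (s i j x) (s i j y)" using assms(1,2) unfolding TA_def by blast
  finally show ?thesis by (metis inf.orderI)
qed

lemma TA_bot:
  assumes "TA s" "i \<noteq> j"
  shows "s i j bot = bot"
proof -
  have "s i j (inf bot (- bot)) = inf (s i j bot) (- s i j bot)"
    using assms unfolding TA_def by metis
  then show ?thesis by simp
qed

lemma TA_le_iff:
  assumes "TA s" "i \<noteq> j"
  shows "x \<le> s i j y \<longleftrightarrow> s i j x \<le> y"
  by (metis TA_involutive TA_mono assms)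

lemma is_atom_subst:
  assumes "TA s" "i \<noteq> j" "is_atom a"
  shows "is_atom (s i j a)"
  unfolding is_atom_def
proof (intro conjI allI impI)
  show "s i j a \<noteq> bot" using assms by (metis TA_bot TA_involutive is_atom_def)
next
  fix y assume "y \<le> s i j a"
  then have "s i j y \<le> a" using TA_le_iff[OF assms(1,2)] by simp
  then have "s i j y = bot \<or> s i j y = a" using assms(3) unfolding is_atom_def by blast
  then show "y = bot \<or> y = s i j a" by (metis TA_bot TA_involutive assms(1,2))
qed

lemma is_atom_word_term:
  assumes "TA s" "word_ok w" "is_atom a"
  shows "is_atom (word_term s w a)"
  using assms(2)
proof (induction w)
  case (Cons x w)
  obtain i j where x: "x = (i, j)" by fastforce
  with Cons.prems have "i \<noteq> j" "word_ok w" by (auto simp: word_ok_def)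
  with Cons.IH show ?case using is_atom_subst assms(1) by (simp add: x)
qed (use assms in simp)

lemma atom_le_compl_iff: "is_atom a \<Longrightarrow> a \<le> - x \<longleftrightarrow> \<not> a \<le> x"
  by (metis inf.absorb_iff2 inf.cobounded1 inf_commute inf_shunt is_atom_def)

text \<open>The second component makes the tag injective, so a permuted tag determines the
  permutation; the first component records the atom at the coordinate \<open>undefined\<close>.
  The \<open>nat\<close> component is forced by the type in the statement and carries no information.\<close>

definition atom_tag :: "'a::boolean_algebra \<Rightarrow> 'i \<Rightarrow> ('a \<times> 'i \<times> nat) set" where
  "atom_tag a k = {(if k = undefined then a else bot, k, 0)}"

definition point :: "'a::boolean_algebra \<Rightarrow> ('i \<times> 'i) list \<Rightarrow> 'i \<Rightarrow> ('a \<times> 'i \<times> nat) set" where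
  "point a w = atom_tag a \<circ> word_perm w"

lemma point_eqD:
  assumes "point a w = point a' w'"
  shows "a = a' \<and> word_perm w = word_perm w'"
proof
  show perm: "word_perm w = word_perm w'"
  proof
    fix k
    show "word_perm w k = word_perm w' k"
      using fun_cong[OF assms, of k] by (simp add: point_def atom_tag_def)
  qed
  define k where "k = word_perm (rev w) undefined"
  have "word_perm w k = undefined" "word_perm w' k = undefined"
    using word_perm_rev_inverse[of w] perm by (simp_all add: k_def)
  then show "a = a'"
    using fun_cong[OF assms, of k] by (simp add: point_def atom_tag_def)
qed

lemma point_comp_transpose: "point a w \<circ> transpose i j = point a (w @ [(i, j)])"
  by (simp add: point_def word_perm_append comp_assoc)

definition points :: "('i \<Rightarrow> ('a::boolean_algebra \<times> 'i \<times> nat) set) set" where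
  "points = {point a w | a w. is_atom a \<and> word_ok w}"

definition point_rep :: "('i \<Rightarrow> 'i \<Rightarrow> 'a::boolean_algebra \<Rightarrow> 'a) \<Rightarrow> 'a \<Rightarrow> ('i \<Rightarrow> ('a \<times> 'i \<times> nat) set) set" where
  "point_rep s x = {point a w | a w. is_atom a \<and> word_ok w \<and> word_term s (rev w) a \<le> x}"

lemma pointsE:
  assumes "q \<in> points"
  obtains a w where "is_atom a" "word_ok w" "q = point a w"
  using assms unfolding points_def by blast

lemma point_in_points: "is_atom a \<Longrightarrow> word_ok w \<Longrightarrow> point a w \<in> points"
  unfolding points_def by blast

lemma point_rep_subset: "point_rep s x \<subseteq> points"
  unfolding point_rep_def points_def by blast

lemma point_in_point_rep_iff:
  assumes "TA s" "is_atom a" "word_ok w"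
  shows "point a w \<in> point_rep s x \<longleftrightarrow> word_term s (rev w) a \<le> x"
proof
  assume "point a w \<in> point_rep s x"
  then obtain a' w' where "word_ok w'" "point a w = point a' w'" "word_term s (rev w') a' \<le> x"
    unfolding point_rep_def by blast
  then show "word_term s (rev w) a \<le> x"
    using point_eqD word_term_rev_cong[OF assms(1,3)] by metis
qed (use assms in \<open>auto simp: point_rep_def\<close>)

lemma subsets_of_points_eqI:
  fixes A B :: "('i \<Rightarrow> ('a::boolean_algebra \<times> 'i \<times> nat) set) set"
  assumes "A \<subseteq> points" "B \<subseteq> points"
    and "\<And>(a :: 'a) (w :: ('i \<times> 'i) list). is_atom a \<Longrightarrow> word_ok w \<Longrightarrow> point a w \<in> A \<longleftrightarrow> point a w \<in> B"
  shows "A = B"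
proof (rule set_eqI)
  fix q
  show "q \<in> A \<longleftrightarrow> q \<in> B"
  proof (cases "q \<in> points")
    case True
    then obtain a :: 'a and w :: "('i \<times> 'i) list" where "is_atom a" "word_ok w" "q = point a w"
      by (rule pointsE)
    with assms(3) show ?thesis by simp
  qed (use assms(1,2) in blast)
qed

lemma permutable_points: "permutable points"
  unfolding permutable_def
  by (auto elim!: pointsE simp: point_comp_transpose intro!: point_in_points word_ok_snoc)

lemma points_subset_weak_space: "points \<subseteq> weak_space UNIV (\<lambda>k. {(bot, k, 0)})"
proof
  fix q assume "q \<in> points"
  then obtain a w where q: "q = point a w" by (rule pointsE)
  have "{k. q k \<noteq> {(bot, k, 0)}} \<subseteq> {k. word_perm w k \<noteq> k} \<union> {undefined}"
    by (auto simp: q point_def atom_tag_def)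
  then show "q \<in> weak_space UNIV (\<lambda>k. {(bot, k, 0)})"
    unfolding weak_space_def using finite_word_perm_support finite_subset by blast
qed

lemma point_rep_inf:
  assumes "TA s"
  shows "point_rep s (inf x y) = point_rep s x \<inter> point_rep s y"
  by (rule subsets_of_points_eqI) (use assms point_rep_subset in \<open>auto simp: point_in_point_rep_iff\<close>)

lemma point_rep_compl:
  fixes s :: "'i \<Rightarrow> 'i \<Rightarrow> 'a::boolean_algebra \<Rightarrow> 'a"
  assumes "TA s"
  shows "point_rep s (- x) = points - point_rep s x"
proof (rule subsets_of_points_eqI)
  fix a :: 'a and w :: "('i \<times> 'i) list"
  assume "is_atom a" "word_ok w"
  with assms show "point a w \<in> point_rep s (- x) \<longleftrightarrow> point a w \<in> points - point_rep s x"
    by (simp add: point_in_point_rep_iff point_in_points atom_le_compl_iff is_atom_word_term)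
qed (auto simp: point_rep_subset)

lemma point_rep_subst:
  fixes s :: "'i \<Rightarrow> 'i \<Rightarrow> 'a::boolean_algebra \<Rightarrow> 'a"
  assumes "TA s" "i \<noteq> j"
  shows "point_rep s (s i j x) = Subst points i j (point_rep s x)"
proof (rule subsets_of_points_eqI)
  fix a :: 'a and w :: "('i \<times> 'i) list"
  assume aw: "is_atom a" "word_ok w"
  have "point a w \<in> Subst points i j (point_rep s x) \<longleftrightarrow> point a (w @ [(i, j)]) \<in> point_rep s x"
    using aw by (simp add: Subst_def point_comp_transpose point_in_points)
  also have "\<dots> \<longleftrightarrow> s i j (word_term s (rev w) a) \<le> x"
    using aw assms by (simp add: point_in_point_rep_iff word_ok_snoc)
  also have "\<dots> \<longleftrightarrow> point a w \<in> point_rep s (s i j x)"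
    using aw assms by (simp add: point_in_point_rep_iff TA_le_iff)
  finally show "point a w \<in> point_rep s (s i j x) \<longleftrightarrow> point a w \<in> Subst points i j (point_rep s x)" ..
qed (auto simp: point_rep_subset Subst_def)

lemma hom_wp_point_rep: "TA s \<Longrightarrow> hom_wp s points (point_rep s)"
  unfolding hom_wp_def
  by (simp add: point_rep_subset point_rep_inf point_rep_compl point_rep_subst)

lemma atom_in_point_rep_iff: "TA s \<Longrightarrow> is_atom a \<Longrightarrow> point a [] \<in> point_rep s x \<longleftrightarrow> a \<le> x"
  using point_in_point_rep_iff[of s a "[]"] by (simp add: word_ok_def)

lemma inj_point_rep:
  assumes "TA s" "atomic_ba TYPE('a::boolean_algebra)"
  shows "inj (point_rep s :: 'a \<Rightarrow> _)"
proof (rule injI)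
  have le: "x \<le> y" if "point_rep s x = point_rep s y" for x y :: 'a
  proof (rule ccontr)
    assume "\<not> x \<le> y"
    then have "inf x (- y) \<noteq> bot" by (metis double_compl inf_shunt)
    then obtain a where a: "is_atom a" "a \<le> x" "a \<le> - y"
      using assms(2) unfolding atomic_ba_def by auto
    then have "a \<le> y"
      using that atom_in_point_rep_iff[OF assms(1) a(1)] by blast
    with a show False by (simp add: atom_le_compl_iff)
  qed
  show "x = y" if "point_rep s x = point_rep s y" for x y :: 'a
    using le that by (metis antisym)
qed

lemma point_rep_prod:
  fixes s :: "'i \<Rightarrow> 'i \<Rightarrow> 'a::boolean_algebra \<Rightarrow> 'a"
  assumes "TA s" "is_prod Y m"
  shows "point_rep s m = points \<inter> (\<Inter>y\<in>Y. point_rep s y)"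
proof (rule subsets_of_points_eqI)
  fix a :: 'a and w :: "('i \<times> 'i) list"
  assume "is_atom a" "word_ok w"
  with assms show "point a w \<in> point_rep s m \<longleftrightarrow> point a w \<in> points \<inter> (\<Inter>y\<in>Y. point_rep s y)"
    unfolding is_prod_def by (auto simp: point_in_point_rep_iff point_in_points intro: order_trans)
qed (auto simp: point_rep_subset)

lemma UN_atoms_point_rep:
  fixes s :: "'i \<Rightarrow> 'i \<Rightarrow> 'a::boolean_algebra \<Rightarrow> 'a"
  assumes "TA s"
  shows "(\<Union>x\<in>{x. is_atom x}. point_rep s x) = points" (is "?U = ?P")
proof (rule antisym)
  show "?U \<subseteq> ?P" using point_rep_subset by blast
  show "?P \<subseteq> ?U"
  proof
    fix q assume "q \<in> ?P"
    then obtain a :: 'a and w :: "('i \<times> 'i) list" where aw: "is_atom a" "word_ok w" "q = point a w"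
      by (rule pointsE)
    with assms have "q \<in> point_rep s (word_term s (rev w) a)" "is_atom (word_term s (rev w) a)"
      by (simp_all add: point_in_point_rep_iff is_atom_word_term)
    then show "q \<in> ?U" by blast
  qed
qed

theorem theorem3p22:
  fixes s :: "'i \<Rightarrow> 'i \<Rightarrow> 'a::boolean_algebra \<Rightarrow> 'a"
  assumes alpha2: "\<exists>i j :: 'i. i \<noteq> j"
    and TA: "TA s"
    and atomic: "atomic_ba TYPE('a)"
  shows "\<exists>(V :: ('i \<Rightarrow> ('a \<times> 'i \<times> nat) set) set) (f :: 'a \<Rightarrow> ('i \<Rightarrow> ('a \<times> 'i \<times> nat) set) set).
           permutable V
         \<and> (infinite (UNIV :: 'i set) \<longrightarrow> (\<exists>U p. (\<forall>i. p i \<in> U) \<and> V \<subseteq> weak_space U p))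
         \<and> hom_wp s V f \<and> inj f
         \<and> (\<forall>Y m. is_prod Y m \<longrightarrow> f m = V \<inter> (\<Inter>y\<in>Y. f y))
         \<and> (\<Union>x\<in>{x. is_atom x}. f x) = V"
proof (rule exI[of _ points], rule exI[of _ "point_rep s"], intro conjI impI allI)
  show "permutable points" by (rule permutable_points)
  show "\<exists>U p. (\<forall>i. p i \<in> U) \<and> points \<subseteq> weak_space U p"
    using points_subset_weak_space by blast
  show "hom_wp s points (point_rep s)" using TA by (rule hom_wp_point_rep)
  show "inj (point_rep s)" using TA atomic by (rule inj_point_rep)
  show "point_rep s m = points \<inter> (\<Inter>y\<in>Y. point_rep s y)" if "is_prod Y m" for Y m
    using TA that by (rule point_rep_prod)
  show "(\<Union>x\<in>{x. is_atom x}. point_rep s x) = points" using TA by (rule UN_atoms_point_rep)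
qed

end
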